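(* For every set $\Gamma\cup\{\varphi\}$ of formulas over $\Sigma^\circ$: if $\Gamma\vdash_{\bf Cila}\varphi$ then $\Gamma\vDash^{\mathsf{RN}}_{\mathcal{M}_{\bf Cila}}\varphi$.
   Context: $\Sigma^\circ$ has unary $\neg,\circ$ and binary $\wedge,\vee,\to$. ${\bf Cila}$ is the Hilbert calculus with Modus Ponens as only rule and axiom schemata: $\alpha\to(\beta\to\alpha)$; $(\alpha\to(\beta\to\gamma))\to((\alpha\to\beta)\to(\alpha\to\gamma))$; $\alpha\to(\beta\to(\alpha\wedge\beta))$; $(\alpha\wedge\beta)\to\alpha$; $(\alpha\wedge\beta)\to\beta$; $\alpha\to(\alpha\vee\beta)$; $\beta\to(\alpha\vee\beta)$; $(\alpha\to\gamma)\to((\beta\to\gamma)\to((\alpha\vee\beta)\to\gamma))$; $\alpha\vee\neg\alpha$; $\alpha\vee(\alpha\to\beta)$; $\circ\alpha\to(\alpha\to(\neg\alpha\to\beta))$; $\neg(\alpha\wedge\neg\alpha)\to\circ\alpha$; $\neg\circ\alpha\to(\alpha\wedge\neg\alpha)$; $\neg\neg\alpha\to\alpha$; and $(\circ\alpha\wedge\circ\beta)\to\circ(\alpha\#\beta)$ for $\#\in\{\vee,\wedge,\to\}$. $\mathcal{A}_{\bf Cila}$ is the $\Sigma^\circ$-multialgebra with universe $\{F,t,T\}$, $D=\{t,T\}$, and: $\tilde\vee$: $F\tilde\vee F=\{F\}$, $F\tilde\vee T=T\tilde\vee F=T\tilde\vee T=\{T\}$, and $x\tilde\vee y=D$ whenever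 $t\in\{x,y\}$; $\tilde\wedge$: $x\tilde\wedge y=\{F\}$ if $F\in\{x,y\}$, $T\tilde\wedge T=\{T\}$, $t\tilde\wedge t=t\tilde\wedge T=T\tilde\wedge t=D$; $\tilde\neg F=\{T\}$, $\tilde\neg t=D$, $\tilde\neg T=\{F\}$; $\tilde\to$: $F\tilde\to F=F\tilde\to T=T\tilde\to T=\{T\}$, $t\tilde\to F=T\tilde\to F=\{F\}$, and $x\tilde\to t=D$ for all $x$, $t\tilde\to T=D$; $\tilde\circ F=\tilde\circ T=\{T\}$, $\tilde\circ t=\{F\}$. A valuation is a map $\nu$ from formulas to $\{F,t,T\}$ with $\nu(\#\alpha)\in\tilde\#\nu(\alpha)$ and $\nu(\alpha\#\beta)\in\nu(\alpha)\tilde\#\nu(\beta)$. $\mathcal{F}_{\bf Cila}$ is the set of valuations with $\nu(\alpha)=t\Rightarrow\nu(\alpha\wedge\neg\alpha)=T$ for all $\alpha$. $\mathcal{M}_{\bf Cila}=(\mathcal{A}_{\bf Cila},D,\mathcal{F}_{\bf Cila})$; $\Gamma\vDash^{\mathsf{RN}}_{\mathcal{M}_{\bf Cila}}\varphi$ iff every $\nu\in\mathcal{F}_{\bf Cila}$ with $\nu[\Gamma]\subseteq D$ has $\nu(\varphi)\in D$. *)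

theory Defs
  imports Main
begin

datatype 'v fm =
    Var 'v
  | Neg "'v fm"
  | Circ "'v fm"
  | And "'v fm" "'v fm"
  | Or "'v fm" "'v fm"
  | Imp "'v fm" "'v fm"

inductive cila_axiom :: "'v fm \<Rightarrow> bool" where
  ax1: "cila_axiom (Imp a (Imp b a))"
| ax2: "cila_axiom (Imp (Imp a (Imp b c)) (Imp (Imp a b) (Imp a c)))"
| ax3: "cila_axiom (Imp a (Imp b (And a b)))"
| ax4: "cila_axiom (Imp (And a b) a)"
| ax5: "cila_axiom (Imp (And a b) b)"
| ax6: "cila_axiom (Imp a (Or a b))"
| ax7: "cila_axiom (Imp b (Or a b))"
| ax8: "cila_axiom (Imp (Imp a c) (Imp (Imp b c) (Imp (Or a b) c)))"
| ax9: "cila_axiom (Or a (Neg a))"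
| ax10: "cila_axiom (Or a (Imp a b))"
| bc1: "cila_axiom (Imp (Circ a) (Imp a (Imp (Neg a) b)))"
| ci: "cila_axiom (Imp (Neg (And a (Neg a))) (Circ a))"
| cl: "cila_axiom (Imp (Neg (Circ a)) (And a (Neg a)))"
| cf: "cila_axiom (Imp (Neg (Neg a)) a)"
| ca_or: "cila_axiom (Imp (And (Circ a) (Circ b)) (Circ (Or a b)))"
| ca_and: "cila_axiom (Imp (And (Circ a) (Circ b)) (Circ (And a b)))"
| ca_imp: "cila_axiom (Imp (And (Circ a) (Circ b)) (Circ (Imp a b)))"

inductive cila_deriv :: "'v fm set \<Rightarrow> 'v fm \<Rightarrow> bool" where
  prem: "\<phi> \<in> \<Gamma> \<Longrightarrow> cila_deriv \<Gamma> \<phi>"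
| axiom: "cila_axiom \<phi> \<Longrightarrow> cila_deriv \<Gamma> \<phi>"
| mp: "cila_deriv \<Gamma> \<phi> \<Longrightarrow> cila_deriv \<Gamma> (Imp \<phi> \<psi>) \<Longrightarrow> cila_deriv \<Gamma> \<psi>"

datatype tv = vF | vt | vT

definition Des :: "tv set" where "Des = {vt, vT}"

fun mor :: "tv \<Rightarrow> tv \<Rightarrow> tv set" where
  "mor vF vF = {vF}"
| "mor vF vT = {vT}"
| "mor vT vF = {vT}"
| "mor vT vT = {vT}"
| "mor _ _ = Des"

fun mand :: "tv \<Rightarrow> tv \<Rightarrow> tv set" where
  "mand vF _ = {vF}"
| "mand _ vF = {vF}"
| "mand vT vT = {vT}"
| "mand _ _ = Des"

fun mneg :: "tv \<Rightarrow> tv set" where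
  "mneg vF = {vT}"
| "mneg vt = Des"
| "mneg vT = {vF}"

fun mimp :: "tv \<Rightarrow> tv \<Rightarrow> tv set" where
  "mimp vF vF = {vT}"
| "mimp vF vT = {vT}"
| "mimp vT vT = {vT}"
| "mimp vt vF = {vF}"
| "mimp vT vF = {vF}"
| "mimp _ vt = Des"
| "mimp vt vT = Des"

fun mcirc :: "tv \<Rightarrow> tv set" where
  "mcirc vF = {vT}"
| "mcirc vT = {vT}"
| "mcirc vt = {vF}"

definition valuation :: "('v fm \<Rightarrow> tv) \<Rightarrow> bool" where
  "valuation \<nu> \<longleftrightarrow>
     (\<forall>a. \<nu> (Neg a) \<in> mneg (\<nu> a)) \<and>
     (\<forall>a. \<nu> (Circ a) \<in> mcirc (\<nu> a)) \<and>
     (\<forall>a b. \<nu> (And a b) \<in> mand (\<nu> a) (\<nu> b)) \<and>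
     (\<forall>a b. \<nu> (Or a b) \<in> mor (\<nu> a) (\<nu> b)) \<and>
     (\<forall>a b. \<nu> (Imp a b) \<in> mimp (\<nu> a) (\<nu> b))"

definition F_Cila :: "('v fm \<Rightarrow> tv) set" where
  "F_Cila = {\<nu>. valuation \<nu> \<and> (\<forall>a. \<nu> a = vt \<longrightarrow> \<nu> (And a (Neg a)) = vT)}"

definition RN_conseq :: "'v fm set \<Rightarrow> 'v fm \<Rightarrow> bool" where
  "RN_conseq \<Gamma> \<phi> \<longleftrightarrow> (\<forall>\<nu>\<in>F_Cila. \<nu> ` \<Gamma> \<subseteq> Des \<longrightarrow> \<nu> \<phi> \<in> Des)"

end

theory Submission
  imports Defs
begin

text \<open>Designatedness of a conjunction, disjunction or implication depends only on the
  designatedness of its arguments, exactly as in two-valued logic; this makes Modus Ponens and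
  the positive axioms sound. Negation and consistency behave classically on the values
  \<open>vF\<close>, \<open>vT\<close>, and these two values are closed under the binary connectives, which
  validates the propagation axioms for \<open>Circ\<close>. The only axiom needing the restriction
  to \<open>F_Cila\<close> is \<open>\<not>(\<alpha> \<and> \<not>\<alpha>) \<rightarrow> \<circ>\<alpha>\<close>: when \<open>\<alpha>\<close> takes the value \<open>vt\<close>,
  the restriction forces \<open>\<alpha> \<and> \<not>\<alpha>\<close> to \<open>vT\<close>, so the premise is \<open>vF\<close>.\<close>

lemma vF_notin_Des [simp]: "vF \<notin> Des"
  and vt_in_Des [simp]: "vt \<in> Des"
  and vT_in_Des [simp]: "vT \<in> Des"
  by (simp_all add: Des_def)

context
  fixes \<nu> :: "'v fm \<Rightarrow> tv"
  assumes val: "valuation \<nu>"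
begin

lemma valuation_Neg: "\<nu> (Neg a) \<in> mneg (\<nu> a)"
  and valuation_And: "\<nu> (And a b) \<in> mand (\<nu> a) (\<nu> b)"
  and valuation_Or: "\<nu> (Or a b) \<in> mor (\<nu> a) (\<nu> b)"
  and valuation_Imp: "\<nu> (Imp a b) \<in> mimp (\<nu> a) (\<nu> b)"
  using val unfolding valuation_def by blast+

lemma valuation_Circ_eq: "\<nu> (Circ a) = (if \<nu> a = vt then vF else vT)"
  using val unfolding valuation_def by (cases "\<nu> a") (auto dest: spec[of _ a])

lemma valuation_Imp_Des: "\<nu> (Imp a b) \<in> Des \<longleftrightarrow> (\<nu> a \<in> Des \<longrightarrow> \<nu> b \<in> Des)"
  using valuation_Imp[of a b] by (cases "\<nu> a"; cases "\<nu> b") (auto simp: Des_def)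

lemma valuation_And_Des: "\<nu> (And a b) \<in> Des \<longleftrightarrow> \<nu> a \<in> Des \<and> \<nu> b \<in> Des"
  using valuation_And[of a b] by (cases "\<nu> a"; cases "\<nu> b") (auto simp: Des_def)

lemma valuation_Or_Des: "\<nu> (Or a b) \<in> Des \<longleftrightarrow> \<nu> a \<in> Des \<or> \<nu> b \<in> Des"
  using valuation_Or[of a b] by (cases "\<nu> a"; cases "\<nu> b") (auto simp: Des_def)

lemma valuation_Neg_Des: "\<nu> (Neg a) \<in> Des \<longleftrightarrow> \<nu> a \<noteq> vT"
  using valuation_Neg[of a] by (cases "\<nu> a") (auto simp: Des_def)

lemma valuation_Neg_vT: "\<nu> a = vT \<Longrightarrow> \<nu> (Neg a) = vF"
  and valuation_Neg_vF: "\<nu> a = vF \<Longrightarrow> \<nu> (Neg a) = vT"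
  using valuation_Neg[of a] by auto

lemma valuation_classical_And: "\<nu> a \<noteq> vt \<Longrightarrow> \<nu> b \<noteq> vt \<Longrightarrow> \<nu> (And a b) \<noteq> vt"
  and valuation_classical_Or: "\<nu> a \<noteq> vt \<Longrightarrow> \<nu> b \<noteq> vt \<Longrightarrow> \<nu> (Or a b) \<noteq> vt"
  and valuation_classical_Imp: "\<nu> a \<noteq> vt \<Longrightarrow> \<nu> b \<noteq> vt \<Longrightarrow> \<nu> (Imp a b) \<noteq> vt"
  using valuation_And[of a b] valuation_Or[of a b] valuation_Imp[of a b]
  by (cases "\<nu> a"; cases "\<nu> b"; auto)+

lemmas valuation_Des_simps =
  valuation_Imp_Des valuation_And_Des valuation_Or_Des valuation_Neg_Des valuation_Circ_eq

end

lemma cila_axiom_designated: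
  assumes val: "valuation \<nu>"
    and contradictory: "\<And>a. \<nu> a = vt \<Longrightarrow> \<nu> (And a (Neg a)) = vT"
    and "cila_axiom \<phi>"
  shows "\<nu> \<phi> \<in> Des"
  using \<open>cila_axiom \<phi>\<close>
proof induction
  case (ci a)
  show ?case
    using contradictory[of a] valuation_Neg_vT[OF val, of "And a (Neg a)"]
    by (cases "\<nu> a") (auto simp: valuation_Des_simps[OF val])
next
  case (cf a)
  show ?case
    using valuation_Neg_vF[OF val, of a] by (cases "\<nu> a") (auto simp: valuation_Des_simps[OF val])
next
  case (ca_or a b)
  show ?case
    using valuation_classical_Or[OF val, of a b] by (auto simp: valuation_Des_simps[OF val])
next
  case (ca_and a b)
  show ?case
    using valuation_classical_And[OF val, of a b] by (auto simp: valuation_Des_simps[OF val])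
next
  case (ca_imp a b)
  show ?case
    using valuation_classical_Imp[OF val, of a b] by (auto simp: valuation_Des_simps[OF val])
next
  case (ax9 a)
  show ?case by (cases "\<nu> a") (auto simp: valuation_Des_simps[OF val])
next
  case (bc1 a b)
  show ?case by (cases "\<nu> a") (auto simp: valuation_Des_simps[OF val])
next
  case (cl a)
  show ?case by (cases "\<nu> a") (auto simp: valuation_Des_simps[OF val])
qed (auto simp: valuation_Des_simps[OF val])

lemma cila_deriv_designated:
  assumes "cila_deriv \<Gamma> \<phi>" and "\<nu> \<in> F_Cila" and "\<nu> ` \<Gamma> \<subseteq> Des"
  shows "\<nu> \<phi> \<in> Des"
proof -
  have val: "valuation \<nu>"
    and contradictory: "\<And>a. \<nu> a = vt \<Longrightarrow> \<nu> (And a (Neg a)) = vT"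
    using assms(2) by (simp_all add: F_Cila_def)
  from assms(1,3) show ?thesis
  proof induction
    case (prem \<phi> \<Gamma>)
    then show ?case by blast
  next
    case (axiom \<phi>)
    then show ?case using cila_axiom_designated[OF val contradictory] by blast
  next
    case (mp \<Gamma> \<phi> \<psi>)
    then show ?case by (simp add: valuation_Imp_Des[OF val])
  qed
qed

theorem mainTheorem5:
  fixes \<Gamma> :: "'v fm set" and \<phi> :: "'v fm"
  assumes "cila_deriv \<Gamma> \<phi>"
  shows "RN_conseq \<Gamma> \<phi>"
  using cila_deriv_designated[OF assms] unfolding RN_conseq_def by blast

end
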